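(* Let $X$ be a finite set with $|X|\geq 3$ and let $N,N'$ be binary level-1 networks on $X$ with $\mathcal R(N)\subseteq\mathcal R(N')$. Let $v$ be a split vertex of $N$ that is the head of a cut arc of $N$, and $v'$ a split vertex of $N'$ that is the head of a cut arc of $N'$. Then $C_N(v)$ and $C_{N'}(v')$ are compatible, i.e. $C_N(v)\cap C_{N'}(v')\in\{\emptyset,C_N(v),C_{N'}(v')\}$. Moreover, if $C_N(v)\subsetneq C_{N'}(v')$, then $C_N(v)$ is not a maximal SN-set of $\mathcal R(N)$.
   Context: A leaf of a DAG is a vertex of in-degree 1 and out-degree 0. For a finite set $X$, a phylogenetic network on $X$ is a DAG (no loops, no multiple arcs) with a unique vertex (the root) of in-degree 0, which has out-degree at least 2, whose set of leaves is $X$, and in which every other non-leaf vertex is either a split vertex (in-degree 1, out-degree $\geq 2$) or a hybrid vertex (in-degree $\geq 2$, out-degree $\geq 1$). It is binary if the root and all split vertices have out-degree 2 and every hybrid vertex has in-degree 2 and out-degree 1. $U(N)$ denotes the underlying undirected graph. A binary level-1 network is a binary phylogenetic network in which every biconnected component of $U(N)$ contains at most one hybrid vertex; by standing convention every cycle of $U(N)$ has at least four vertices. An arc is a cut arc if deleting it disconnects $U(N)$. For a vertex $v$, $C_N(v)$ is the set of leaves reachable from $v$ by a directed path. For distinct $a,b,c\in X$, the triplet $ab|c$ is consistent with $N$ if there exist distinct vertices $v,w$ of $N$ and directed paths from $v$ to $c$, from $v$ to $w$, from $w$ to $a$ and from $w$ to $b$ such that no two of these paths share an interior vertex; $\mathcal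 R(N)$ is the set of all triplets consistent with $N$. For a set $\mathcal R$ of triplets on $X$, a subset $S\subseteq X$ is an SN-set of $\mathcal R$ if there is no triplet $xy|z\in\mathcal R$ with $x,z\in S$ and $y\notin S$; it is non-trivial if $S\neq X$, and a non-trivial SN-set is maximal if no non-trivial SN-set strictly contains it. *)

theory Defs
  imports Main
begin

text \<open>A directed graph is given by a vertex set V and an arc set A of ordered pairs
  (so multiple arcs are impossible).\<close>

definition in_deg :: "('v \<times> 'v) set \<Rightarrow> 'v \<Rightarrow> nat" where
  "in_deg A v = card {u. (u, v) \<in> A}"

definition out_deg :: "('v \<times> 'v) set \<Rightarrow> 'v \<Rightarrow> nat" where
  "out_deg A v = card {w. (v, w) \<in> A}"

definition is_dag :: "'v set \<Rightarrow> ('v \<times> 'v) set \<Rightarrow> bool" where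
  "is_dag V A \<longleftrightarrow> finite V \<and> A \<subseteq> V \<times> V \<and> (\<forall>x. (x, x) \<notin> A\<^sup>+)"

definition is_leaf :: "('v \<times> 'v) set \<Rightarrow> 'v \<Rightarrow> bool" where
  "is_leaf A v \<longleftrightarrow> in_deg A v = 1 \<and> out_deg A v = 0"

definition is_split :: "('v \<times> 'v) set \<Rightarrow> 'v \<Rightarrow> bool" where
  "is_split A v \<longleftrightarrow> in_deg A v = 1 \<and> out_deg A v \<ge> 2"

definition is_hybrid :: "('v \<times> 'v) set \<Rightarrow> 'v \<Rightarrow> bool" where
  "is_hybrid A v \<longleftrightarrow> in_deg A v \<ge> 2 \<and> out_deg A v \<ge> 1"

definition phylo_net :: "'v set \<Rightarrow> ('v \<times> 'v) set \<Rightarrow> 'v set \<Rightarrow> bool" where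
  "phylo_net V A X \<longleftrightarrow> is_dag V A \<and>
     (\<exists>r\<in>V. in_deg A r = 0 \<and> out_deg A r \<ge> 2 \<and> (\<forall>u\<in>V. in_deg A u = 0 \<longrightarrow> u = r) \<and>
        (\<forall>u\<in>V. u \<noteq> r \<and> \<not> is_leaf A u \<longrightarrow> is_split A u \<or> is_hybrid A u)) \<and>
     {u \<in> V. is_leaf A u} = X"

definition binary_net :: "'v set \<Rightarrow> ('v \<times> 'v) set \<Rightarrow> 'v set \<Rightarrow> bool" where
  "binary_net V A X \<longleftrightarrow> phylo_net V A X \<and>
     (\<forall>u\<in>V. in_deg A u = 0 \<longrightarrow> out_deg A u = 2) \<and>
     (\<forall>u\<in>V. is_split A u \<longrightarrow> out_deg A u = 2) \<and>
     (\<forall>u\<in>V. is_hybrid A u \<longrightarrow> in_deg A u = 2 \<and> out_deg A u = 1)"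

definition uedges :: "('v \<times> 'v) set \<Rightarrow> ('v \<times> 'v) set" where
  "uedges A = A \<union> A\<inverse>"

definition connected_on :: "('v \<times> 'v) set \<Rightarrow> 'v set \<Rightarrow> bool" where
  "connected_on E S \<longleftrightarrow> (\<forall>x\<in>S. \<forall>y\<in>S. (x, y) \<in> (E \<inter> (S \<times> S))\<^sup>*)"

text \<open>Vertex set of a biconnected (sub)graph: at least two vertices, connected, and
  stays connected after deleting any single vertex (a single edge counts as biconnected).\<close>
definition biconnected_on :: "('v \<times> 'v) set \<Rightarrow> 'v set \<Rightarrow> bool" where
  "biconnected_on E S \<longleftrightarrow> finite S \<and> card S \<ge> 2 \<and> connected_on E S \<and>
     (\<forall>x\<in>S. connected_on E (S - {x}))"

definition biconnected_component :: "'v set \<Rightarrow> ('v \<times> 'v) set \<Rightarrow> 'v set \<Rightarrow> bool" where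
  "biconnected_component V E S \<longleftrightarrow> S \<subseteq> V \<and> biconnected_on E S \<and>
     (\<forall>T. S \<subset> T \<and> T \<subseteq> V \<longrightarrow> \<not> biconnected_on E T)"

definition binary_level1_net :: "'v set \<Rightarrow> ('v \<times> 'v) set \<Rightarrow> 'v set \<Rightarrow> bool" where
  "binary_level1_net V A X \<longleftrightarrow> binary_net V A X \<and>
     (\<forall>S. biconnected_component V (uedges A) S \<longrightarrow> card {h \<in> S. is_hybrid A h} \<le> 1) \<and>
     \<comment> \<open>standing convention: every cycle of U(N) has at least four vertices (no triangles)\<close>
     (\<forall>x y z. (x, y) \<in> uedges A \<and> (y, z) \<in> uedges A \<and> (z, x) \<in> uedges A \<longrightarrow>
        \<not> (x \<noteq> y \<and> y \<noteq> z \<and> x \<noteq> z))"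

definition cut_arc :: "'v set \<Rightarrow> ('v \<times> 'v) set \<Rightarrow> 'v \<times> 'v \<Rightarrow> bool" where
  "cut_arc V A e \<longleftrightarrow> e \<in> A \<and> \<not> connected_on (uedges (A - {e})) V"

definition cluster :: "('v \<times> 'v) set \<Rightarrow> 'v set \<Rightarrow> 'v \<Rightarrow> 'v set" where
  "cluster A X v = {x \<in> X. (v, x) \<in> A\<^sup>*}"

definition dpath :: "('v \<times> 'v) set \<Rightarrow> 'v \<Rightarrow> 'v \<Rightarrow> 'v list \<Rightarrow> bool" where
  "dpath A s t p \<longleftrightarrow> p \<noteq> [] \<and> hd p = s \<and> last p = t \<and>
     (\<forall>i. Suc i < length p \<longrightarrow> (p ! i, p ! Suc i) \<in> A)"

definition interior :: "'v list \<Rightarrow> 'v set" where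
  "interior p = set (butlast (tl p))"

text \<open>Triplet ab|c, represented as (a,b,c), is consistent with N.\<close>
definition triplet_consistent :: "'v set \<Rightarrow> ('v \<times> 'v) set \<Rightarrow> 'v \<Rightarrow> 'v \<Rightarrow> 'v \<Rightarrow> bool" where
  "triplet_consistent V A a b c \<longleftrightarrow>
     (\<exists>v\<in>V. \<exists>w\<in>V. \<exists>pc pw pa pb. v \<noteq> w \<and>
        dpath A v c pc \<and> dpath A v w pw \<and> dpath A w a pa \<and> dpath A w b pb \<and>
        interior pc \<inter> interior pw = {} \<and> interior pc \<inter> interior pa = {} \<and>
        interior pc \<inter> interior pb = {} \<and> interior pw \<inter> interior pa = {} \<and>
        interior pw \<inter> interior pb = {} \<and> interior pa \<inter> interior pb = {})"

definition triplets :: "'v set \<Rightarrow> ('v \<times> 'v) set \<Rightarrow> 'v set \<Rightarrow> ('v \<times> 'v \<times> 'v) set" where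
  "triplets V A X = {(a, b, c). a \<in> X \<and> b \<in> X \<and> c \<in> X \<and> a \<noteq> b \<and> a \<noteq> c \<and> b \<noteq> c \<and>
     triplet_consistent V A a b c}"

definition SN_set :: "('v \<times> 'v \<times> 'v) set \<Rightarrow> 'v set \<Rightarrow> 'v set \<Rightarrow> bool" where
  "SN_set R X S \<longleftrightarrow> S \<subseteq> X \<and> \<not> (\<exists>x y z. (x, y, z) \<in> R \<and> x \<in> S \<and> z \<in> S \<and> y \<notin> S)"

definition maximal_SN_set :: "('v \<times> 'v \<times> 'v) set \<Rightarrow> 'v set \<Rightarrow> 'v set \<Rightarrow> bool" where
  "maximal_SN_set R X S \<longleftrightarrow> SN_set R X S \<and> S \<noteq> X \<and>
     \<not> (\<exists>T. SN_set R X T \<and> T \<noteq> X \<and> S \<subset> T)"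

end

theory Submission
  imports Defs
begin

text \<open>Let (u, v) be a cut arc of N whose head v is a split vertex, and C its cluster.
  Since (u, v) is a cut arc, every directed path from outside the part of N below v into it
  passes through v. Hence no triplet ab|c with a, c \<in> C and b \<notin> C is consistent with N
  (the paths from the two branching vertices to c and to a would share v), so C is an
  SN-set of R(N); and every triplet ab|c with a, b \<in> C and c \<notin> C is consistent with N,
  by taking disjoint paths from a common ancestor.

  Applied to N', the first fact and R(N) \<subseteq> R(N') make C' an SN-set of R(N); the second fact
  then shows that C and C' cannot overlap properly. Moreover C' \<noteq> X: otherwise a lowest
  non-hybrid vertex not below v' would have two children, each equal to v' or a hybrid
  parent of v' (adjacent hybrids are impossible in a level-1 network), although v' has only
  one parent. So if C \<subset> C', then C' is a larger non-trivial SN-set and C is not maximal.\<close>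

lemma dpath_Cons:
  "dpath A s t (x # p) \<longleftrightarrow>
     x = s \<and> (p = [] \<longrightarrow> s = t) \<and> (p \<noteq> [] \<longrightarrow> (s, hd p) \<in> A \<and> dpath A (hd p) t p)"
  by (cases p) (auto simp: dpath_def nth_Cons split: nat.splits)

lemma dpath_ConsI: "(s, x) \<in> A \<Longrightarrow> dpath A x t p \<Longrightarrow> dpath A s t (s # p)"
  by (simp add: dpath_Cons) (simp add: dpath_def)

lemma rtrancl_imp_dpath: "(s, t) \<in> A\<^sup>* \<Longrightarrow> \<exists>p. dpath A s t p"
proof (induction rule: converse_rtrancl_induct)
  case base
  have "dpath A t t [t]" by (simp add: dpath_def)
  then show ?case ..
next
  case (step y z)
  then show ?case by (blast intro: dpath_ConsI)
qed

lemma dpath_set_rtrancl: "dpath A s t p \<Longrightarrow> x \<in> set p \<Longrightarrow> (s, x) \<in> A\<^sup>* \<and> (x, t) \<in> A\<^sup>*"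
proof (induction p arbitrary: s x)
  case Nil then show ?case by (simp add: dpath_def)
next
  case (Cons y q)
  show ?case
  proof (cases "q = []")
    case True then show ?thesis using Cons.prems by (auto simp: dpath_Cons)
  next
    case False
    with Cons.prems have hd: "(s, hd q) \<in> A" "dpath A (hd q) t q" "y = s" by (auto simp: dpath_Cons)
    have "(hd q, t) \<in> A\<^sup>*" using Cons.IH[OF hd(2) hd_in_set[OF False]] by simp
    then show ?thesis using Cons.prems hd Cons.IH[OF hd(2)]
      by (auto intro: converse_rtrancl_into_rtrancl)
  qed
qed

lemma dpath_imp_rtrancl: "dpath A s t p \<Longrightarrow> (s, t) \<in> A\<^sup>*"
  using dpath_set_rtrancl[of A s t p s] by (auto simp: dpath_def)

lemma dpath_tl_trancl: "dpath A s t p \<Longrightarrow> x \<in> set (tl p) \<Longrightarrow> (s, x) \<in> A\<^sup>+"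
  by (cases p) (auto simp: dpath_Cons dest: dpath_set_rtrancl intro: rtrancl_into_trancl2)

lemma dpath_butlast_trancl: "dpath A s t p \<Longrightarrow> x \<in> set (butlast p) \<Longrightarrow> (x, t) \<in> A\<^sup>+"
proof (induction p arbitrary: s)
  case Nil then show ?case by simp
next
  case (Cons y q)
  then have "q \<noteq> []" by auto
  with Cons.prems have "(s, hd q) \<in> A" "dpath A (hd q) t q" "y = s" by (auto simp: dpath_Cons)
  moreover have "(hd q, t) \<in> A\<^sup>*" using \<open>dpath A (hd q) t q\<close> by (rule dpath_imp_rtrancl)
  ultimately show ?case using Cons \<open>q \<noteq> []\<close> by (auto intro: rtrancl_into_trancl2)
qed

lemma interior_subset_set: "interior p \<subseteq> set p"
  by (cases p) (auto simp: interior_def dest: in_set_butlastD)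

lemma dpath_interior_trancl:
  "dpath A s t p \<Longrightarrow> x \<in> interior p \<Longrightarrow> (s, x) \<in> A\<^sup>+ \<and> (x, t) \<in> A\<^sup>+"
  unfolding interior_def
  by (metis butlast_tl dpath_butlast_trancl dpath_tl_trancl in_set_butlastD list.set_sel(2) tl_Nil)

lemma interiorI: "x \<in> set p \<Longrightarrow> x \<noteq> hd p \<Longrightarrow> x \<noteq> last p \<Longrightarrow> x \<in> interior p"
proof (cases p)
  case (Cons y q)
  moreover assume "x \<in> set p" "x \<noteq> hd p" "x \<noteq> last p"
  ultimately have "x \<in> set q" "x \<noteq> last q" by (auto split: if_splits)
  then have "x \<in> set (butlast q)" by (cases q rule: rev_cases) auto
  then show ?thesis using Cons by (simp add: interior_def)
qed simp

lemma sym_uedges: "sym (uedges A)"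
  by (simp add: uedges_def sym_Un_converse)

lemma connected_onI_root:
  assumes "E \<subseteq> S \<times> S" "sym E" "\<And>a. a \<in> S \<Longrightarrow> (r, a) \<in> E\<^sup>*"
  shows "connected_on E S"
proof -
  have "(x, y) \<in> E\<^sup>*" if "x \<in> S" "y \<in> S" for x y
  proof -
    have "(x, r) \<in> E\<^sup>*" using assms(3)[OF \<open>x \<in> S\<close>] sym_rtrancl[OF assms(2)] by (auto dest: symD)
    then show ?thesis using assms(3)[OF \<open>y \<in> S\<close>] by (rule rtrancl_trans)
  qed
  moreover have "E \<inter> S \<times> S = E" using assms(1) by blast
  ultimately show ?thesis unfolding connected_on_def by simp
qed

lemma rtrancl_Diff_arc_if_not_reached:
  "(r, a) \<in> A\<^sup>* \<Longrightarrow> (v, a) \<notin> A\<^sup>* \<Longrightarrow> (r, a) \<in> (A - {(u, v)})\<^sup>*"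
proof (induction rule: rtrancl_induct)
  case (step b a)
  have "(v, b) \<notin> A\<^sup>*"
  proof
    assume "(v, b) \<in> A\<^sup>*"
    then have "(v, a) \<in> A\<^sup>*" using step.hyps(2) by (rule rtrancl.rtrancl_into_rtrancl)
    then show False using step.prems by contradiction
  qed
  then have "(r, b) \<in> (A - {(u, v)})\<^sup>*" using step.IH by simp
  moreover have "a \<noteq> v" using step.prems by auto
  then have "(b, a) \<in> A - {(u, v)}" using step.hyps(2) by simp
  ultimately show ?case by (rule rtrancl.rtrancl_into_rtrancl)
qed simp

lemma biconnected_on_arc:
  assumes "(c, d) \<in> A" "c \<noteq> d" shows "biconnected_on (uedges A) {c, d}"
proof -
  let ?R = "uedges A \<inter> {c, d} \<times> {c, d}"
  have "(c, d) \<in> ?R\<^sup>*" "(d, c) \<in> ?R\<^sup>*" using assms(1) by (auto simp: uedges_def)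
  then have conn: "connected_on (uedges A) {c, d}" unfolding connected_on_def by blast
  have "connected_on (uedges A) ({c, d} - {x})" for x
  proof (cases "x \<in> {c, d}")
    case True
    then obtain y where "{c, d} - {x} = {y}" using assms(2) by auto
    then show ?thesis unfolding connected_on_def by simp
  qed (use conn in simp)
  with conn show ?thesis using assms(2) unfolding biconnected_on_def by simp
qed

lemma biconnected_component_exists:
  assumes "finite V" "S \<subseteq> V" "biconnected_on E S"
  obtains T where "S \<subseteq> T" "biconnected_component V E T"
proof -
  let ?F = "{T. S \<subseteq> T \<and> T \<subseteq> V \<and> biconnected_on E T}"
  have "?F \<subseteq> Pow V" by blast
  then have "finite ?F" using assms(1) by (simp add: finite_subset)
  moreover have "S \<in> ?F" using assms(2,3) by simp
  ultimately obtain T where T: "T \<in> ?F" and max: "\<forall>T'\<in>?F. T \<le> T' \<longrightarrow> T = T'"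
    by (meson finite_has_maximal2)
  have "biconnected_component V E T"
    unfolding biconnected_component_def
  proof (intro conjI allI impI)
    show "T \<subseteq> V" "biconnected_on E T" using T by simp_all
    fix T' assume "T \<subset> T' \<and> T' \<subseteq> V"
    then show "\<not> biconnected_on E T'" using T max by blast
  qed
  with T show thesis using that by blast
qed

lemma parent_unique:
  assumes "in_deg A a = 1" "(p, a) \<in> A" "(q, a) \<in> A" shows "p = q"
proof -
  obtain z where "{x. (x, a) \<in> A} = {z}" using assms(1) unfolding in_deg_def by (rule card_1_singletonE)
  then show ?thesis using assms(2,3) by (metis mem_Collect_eq singletonD)
qed

lemma two_children: "out_deg A a \<ge> 2 \<Longrightarrow> \<exists>c d. (a, c) \<in> A \<and> (a, d) \<in> A \<and> c \<noteq> d"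
proof -
  assume "out_deg A a \<ge> 2"
  then obtain c B where "{x. (a, x) \<in> A} = insert c B" "c \<notin> B" "1 \<le> card B"
    unfolding out_deg_def numeral_2_eq_2 by (auto simp: card_le_Suc_iff)
  moreover then obtain d where "d \<in> B" by (cases "B = {}") auto
  ultimately show ?thesis by blast
qed

lemma child_exists: "out_deg A a \<noteq> 0 \<Longrightarrow> \<exists>c. (a, c) \<in> A"
  unfolding out_deg_def by (cases "{c. (a, c) \<in> A} = {}") auto

lemma parent_exists: "in_deg A a \<noteq> 0 \<Longrightarrow> \<exists>p. (p, a) \<in> A"
  unfolding in_deg_def by (cases "{p. (p, a) \<in> A} = {}") auto

lemma in_deg_0_no_parent:
  assumes "finite A" "in_deg A a = 0" shows "(p, a) \<notin> A"
proof -
  have "finite {p. (p, a) \<in> A}" using finite_imageI[OF assms(1), of fst] by (rule finite_subset[rotated]) force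
  then show ?thesis using assms(2) by (simp add: in_deg_def)
qed

lemma out_deg_0_no_child:
  assumes "finite A" "out_deg A a = 0" shows "(a, c) \<notin> A"
proof -
  have "finite {c. (a, c) \<in> A}" using finite_imageI[OF assms(1), of snd] by (rule finite_subset[rotated]) force
  then show ?thesis using assms(2) by (simp add: out_deg_def)
qed

locale dag =
  fixes V :: "'v set" and A :: "('v \<times> 'v) set"
  assumes is_dag: "is_dag V A"
begin

lemma finite_V: "finite V" and arcs_subset: "A \<subseteq> V \<times> V" and acyclic: "acyclic A"
  using is_dag unfolding is_dag_def acyclic_def by simp_all

lemma finite_A: "finite A"
  using finite_subset[OF arcs_subset] finite_V by simp

lemma wf_arcs: "wf A" and wf_converse_arcs: "wf (A\<inverse>)"
  using finite_A acyclic by (simp_all add: finite_acyclic_wf finite_acyclic_wf_converse)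

lemma trancl_irrefl: "(x, x) \<notin> A\<^sup>+"
  using acyclic by (simp add: acyclic_def)

lemma trancl_in_V: "(x, y) \<in> A\<^sup>+ \<Longrightarrow> x \<in> V \<and> y \<in> V"
  using trancl_subset_Sigma[OF arcs_subset] by auto

lemma rtrancl_in_V: "(x, y) \<in> A\<^sup>* \<Longrightarrow> x \<in> V \<Longrightarrow> y \<in> V"
  by (auto simp: rtrancl_eq_or_trancl dest: trancl_in_V)

lemma reaches_all_from_source:
  assumes source: "\<And>a. a \<in> V \<Longrightarrow> a \<noteq> r \<Longrightarrow> in_deg A a \<noteq> 0" and "a \<in> V"
  shows "(r, a) \<in> A\<^sup>*"
  using wf_arcs \<open>a \<in> V\<close>
proof (induction a rule: wf_induct_rule)
  case (less a)
  show ?case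
  proof (cases "a = r")
    case False
    then have "in_deg A a \<noteq> 0" using source less.prems by simp
    then obtain p where p: "(p, a) \<in> A" using parent_exists[of A a] by auto
    then have "p \<in> V" using arcs_subset by auto
    with p have "(r, p) \<in> A\<^sup>*" using less.IH by simp
    then show ?thesis using p by (rule rtrancl.rtrancl_into_rtrancl)
  qed simp
qed

lemma rtrancl_Diff_arc_from_head: "(v, a) \<in> A\<^sup>* \<Longrightarrow> (v, a) \<in> (A - {(u, v)})\<^sup>*"
proof (induction rule: rtrancl_induct)
  case (step b a)
  have "(b, a) \<noteq> (u, v)"
  proof
    assume "(b, a) = (u, v)"
    then have "(v, v) \<in> A\<^sup>+" using step.hyps by (simp add: rtrancl_into_trancl1)
    then show False using trancl_irrefl by simp
  qed
  with step.hyps(2) have "(b, a) \<in> A - {(u, v)}" by simp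
  with step.IH show ?case by (rule rtrancl.rtrancl_into_rtrancl)
qed simp

lemma interiors_disjoint:
  assumes "dpath A s t p" "dpath A s t' p'" "set p \<inter> set p' = {s}"
  shows "interior p \<inter> interior p' = {}"
proof -
  have "x = s" if "x \<in> interior p" "x \<in> interior p'" for x
    using that interior_subset_set[of p] interior_subset_set[of p'] assms(3) by auto
  moreover have "x \<noteq> s" if "x \<in> interior p" for x
    using dpath_interior_trancl[OF assms(1) that] trancl_irrefl by auto
  ultimately show ?thesis by auto
qed

lemma interiors_disjoint_if_not_trancl:
  assumes "dpath A s t p" "dpath A w z q" "(w, t) \<notin> A\<^sup>+"
  shows "interior p \<inter> interior q = {}"
proof -
  have "(w, t) \<in> A\<^sup>+" if "x \<in> interior p" "x \<in> interior q" for x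
    using dpath_interior_trancl[OF assms(1) that(1)] dpath_interior_trancl[OF assms(2) that(2)]
    by (meson trancl_trans)
  then show ?thesis using assms(3) by blast
qed

lemma disjoint_paths_to_incomparable:
  assumes "(s, a) \<in> A\<^sup>*" "(s, b) \<in> A\<^sup>*" "(a, b) \<notin> A\<^sup>*" "(b, a) \<notin> A\<^sup>*"
  shows "\<exists>w pa pb. (s, w) \<in> A\<^sup>* \<and> dpath A w a pa \<and> dpath A w b pb \<and> set pa \<inter> set pb = {w}"
  using wf_converse_arcs assms
proof (induction s rule: wf_induct_rule)
  case (less s)
  have "s \<noteq> a" "s \<noteq> b" using less.prems by auto
  then have "(s, a) \<in> A\<^sup>+" "(s, b) \<in> A\<^sup>+" using less.prems(1,2) by (simp_all add: rtrancl_eq_or_trancl)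
  then obtain ca cb where ca: "(s, ca) \<in> A" "(ca, a) \<in> A\<^sup>*" and cb: "(s, cb) \<in> A" "(cb, b) \<in> A\<^sup>*"
    by (blast dest: tranclD)
  show ?case
  proof (cases "\<exists>c. (s, c) \<in> A \<and> (c, a) \<in> A\<^sup>* \<and> (c, b) \<in> A\<^sup>*")
    case True
    then obtain c where c: "(s, c) \<in> A" "(c, a) \<in> A\<^sup>*" "(c, b) \<in> A\<^sup>*" by blast
    then obtain w pa pb where "(c, w) \<in> A\<^sup>*" "dpath A w a pa" "dpath A w b pb" "set pa \<inter> set pb = {w}"
      using less.IH less.prems(3,4) by blast
    moreover have "(s, w) \<in> A\<^sup>*" using c(1) \<open>(c, w) \<in> A\<^sup>*\<close> by (rule converse_rtrancl_into_rtrancl)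
    ultimately show ?thesis by blast
  next
    case False
    txt \<open>No child of s reaches both a and b, so paths through two such children meet only in s.\<close>
    obtain qa where qa: "dpath A ca a qa" using rtrancl_imp_dpath[OF ca(2)] ..
    obtain qb where qb: "dpath A cb b qb" using rtrancl_imp_dpath[OF cb(2)] ..
    have "s \<notin> set q" if "dpath A c t q" "(s, c) \<in> A" for c t q
    proof
      assume "s \<in> set q"
      then have "(c, s) \<in> A\<^sup>*" using dpath_set_rtrancl[OF that(1)] by simp
      with that(2) have "(s, s) \<in> A\<^sup>+" by (rule rtrancl_into_trancl2)
      then show False using trancl_irrefl by simp
    qed
    then have "s \<notin> set qa" "s \<notin> set qb" using qa qb ca(1) cb(1) by auto
    moreover have "set qa \<inter> set qb = {}"
    proof (rule ccontr)
      assume "set qa \<inter> set qb \<noteq> {}"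
      then obtain x where "x \<in> set qa" "x \<in> set qb" by blast
      then have "(ca, x) \<in> A\<^sup>*" "(x, b) \<in> A\<^sup>*"
        using dpath_set_rtrancl[OF qa] dpath_set_rtrancl[OF qb] by auto
      then have "(ca, b) \<in> A\<^sup>*" by (rule rtrancl_trans)
      then show False using False ca by blast
    qed
    ultimately have "set (s # qa) \<inter> set (s # qb) = {s}" by auto
    moreover have "dpath A s a (s # qa)" "dpath A s b (s # qb)"
      using ca(1) qa cb(1) qb by (auto intro: dpath_ConsI)
    ultimately show ?thesis by blast
  qed
qed

end

locale phylo_network =
  fixes V :: "'v set" and A :: "('v \<times> 'v) set" and X :: "'v set"
  assumes phylo_net: "phylo_net V A X"
begin

sublocale dag V A
  using phylo_net by unfold_locales (simp add: phylo_net_def)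

lemma leaves_eq: "{x \<in> V. is_leaf A x} = X"
  using phylo_net by (simp add: phylo_net_def)

lemma leaf_no_child: "x \<in> X \<Longrightarrow> (x, y) \<notin> A"
  using leaves_eq out_deg_0_no_child[OF finite_A] by (auto simp: is_leaf_def)

lemma leaf_rtrancl: "x \<in> X \<Longrightarrow> (x, y) \<in> A\<^sup>* \<Longrightarrow> y = x"
  using leaf_no_child by (auto elim: converse_rtranclE)

lemma root_exists:
  "\<exists>r\<in>V. in_deg A r = 0 \<and> out_deg A r \<ge> 2 \<and>
     (\<forall>a\<in>V. a \<noteq> r \<and> \<not> is_leaf A a \<longrightarrow> is_split A a \<or> is_hybrid A a)"
  using phylo_net unfolding phylo_net_def by blast

lemma source_reaches_all:
  assumes "r \<in> V" "in_deg A r = 0" "a \<in> V" shows "(r, a) \<in> A\<^sup>*"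
proof (rule reaches_all_from_source)
  show "in_deg A x \<noteq> 0" if "x \<in> V" "x \<noteq> r" for x
    using phylo_net assms(1,2) that unfolding phylo_net_def by metis
qed (rule assms(3))

end

lemma binary_level1_net_phylo_net: "binary_level1_net V A X \<Longrightarrow> phylo_net V A X"
  by (simp add: binary_level1_net_def binary_net_def)

lemma binary_level1_net_no_adjacent_hybrids:
  assumes net: "binary_level1_net V A X" and cd: "(c, d) \<in> A" and "is_hybrid A c"
  shows "\<not> is_hybrid A d"
proof
  assume "is_hybrid A d"
  interpret phylo_network V A X using net by unfold_locales (rule binary_level1_net_phylo_net)
  have "c \<noteq> d" using cd trancl_irrefl by blast
  with cd have "biconnected_on (uedges A) {c, d}" by (rule biconnected_on_arc)
  moreover have "{c, d} \<subseteq> V" using cd arcs_subset by blast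
  ultimately obtain T where "{c, d} \<subseteq> T" "biconnected_component V (uedges A) T"
    using finite_V by (elim biconnected_component_exists[rotated 2])
  then have "card {h \<in> T. is_hybrid A h} \<le> 1" "finite T"
    using net finite_V unfolding binary_level1_net_def biconnected_component_def
    by (auto intro: finite_subset)
  moreover have "{c, d} \<subseteq> {h \<in> T. is_hybrid A h}"
    using \<open>{c, d} \<subseteq> T\<close> \<open>is_hybrid A c\<close> \<open>is_hybrid A d\<close> by blast
  ultimately have "card {c, d} \<le> 1" using card_mono[of "{h \<in> T. is_hybrid A h}" "{c, d}"] by simp
  then show False using \<open>c \<noteq> d\<close> by simp
qed

lemma SN_set_antimono: "R \<subseteq> R' \<Longrightarrow> SN_set R' X S \<Longrightarrow> SN_set R X S"
  unfolding SN_set_def by blast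

locale split_head_of_cut_arc = phylo_network +
  fixes u v :: 'v
  assumes split: "is_split A v" and cut: "cut_arc V A (u, v)"
begin

lemma v_notin_X: "v \<notin> X"
  using split leaves_eq by (auto simp: is_split_def is_leaf_def)

lemma v_in_V: "v \<in> V"
  using cut arcs_subset unfolding cut_arc_def by blast

lemma source_not_below_v: "in_deg A r = 0 \<Longrightarrow> (v, r) \<notin> A\<^sup>*"
proof
  assume "in_deg A r = 0" "(v, r) \<in> A\<^sup>*"
  moreover have "r \<noteq> v" using \<open>in_deg A r = 0\<close> split by (auto simp: is_split_def)
  ultimately obtain y where "(y, r) \<in> A" by (auto simp: rtrancl_eq_or_trancl dest: tranclD2)
  then show False using in_deg_0_no_parent[OF finite_A \<open>in_deg A r = 0\<close>] by contradiction
qed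

lemma arc_entering_below_v:
  assumes yx: "(y, x) \<in> A" and vx: "(v, x) \<in> A\<^sup>*" and vy: "(v, y) \<notin> A\<^sup>*"
  shows "x = v"
proof (rule ccontr)
  assume "x \<noteq> v"
  txt \<open>Then (y, x) joins the two sides of the cut arc (u, v): the root reaches y without
    using (u, v), and x is connected to v below it.\<close>
  obtain r where "r \<in> V" "in_deg A r = 0" using root_exists by blast
  then have r: "\<And>a. a \<in> V \<Longrightarrow> (r, a) \<in> A\<^sup>*" by (rule source_reaches_all)
  define E where "E = uedges (A - {(u, v)})"
  have sym: "sym E" unfolding E_def by (rule sym_uedges)
  have "A - {(u, v)} \<subseteq> E" unfolding E_def uedges_def by blast
  then have to_E: "(A - {(u, v)})\<^sup>* \<subseteq> E\<^sup>*" by (rule rtrancl_mono)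
  have outside: "(r, a) \<in> E\<^sup>*" if "a \<in> V" "(v, a) \<notin> A\<^sup>*" for a
    using to_E rtrancl_Diff_arc_if_not_reached[OF r[OF that(1)] that(2)] by blast
  have below: "(v, a) \<in> E\<^sup>*" if "(v, a) \<in> A\<^sup>*" for a
    using to_E rtrancl_Diff_arc_from_head[OF that] by blast
  have "y \<in> V" using yx arcs_subset by blast
  then have "(r, y) \<in> E\<^sup>*" using outside vy by blast
  moreover have "(y, x) \<in> E" unfolding E_def uedges_def using yx \<open>x \<noteq> v\<close> by simp
  moreover have "(x, v) \<in> E\<^sup>*"
    using below[OF vx] sym_rtrancl[OF sym] by (auto dest: symD)
  ultimately have "(r, v) \<in> E\<^sup>*" by (meson rtrancl_trans r_into_rtrancl)
  then have "(r, a) \<in> E\<^sup>*" if "a \<in> V" for a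
    using below outside that by (cases "(v, a) \<in> A\<^sup>*") (auto intro: rtrancl_trans)
  moreover have "E \<subseteq> V \<times> V" unfolding E_def uedges_def using arcs_subset by blast
  ultimately have "connected_on E V" using sym by (blast intro: connected_onI_root)
  then show False using cut unfolding cut_arc_def E_def by simp
qed

lemma dpath_into_below_v_passes_v:
  "dpath A s t q \<Longrightarrow> (v, s) \<notin> A\<^sup>* \<Longrightarrow> (v, t) \<in> A\<^sup>* \<Longrightarrow> v \<in> set q"
proof (induction q arbitrary: s)
  case (Cons y q)
  show ?case
  proof (cases "q = []")
    case False
    with Cons.prems have hd: "(s, hd q) \<in> A" "dpath A (hd q) t q" by (auto simp: dpath_Cons)
    show ?thesis
    proof (cases "(v, hd q) \<in> A\<^sup>*")
      case True
      then have "hd q = v" using arc_entering_below_v[OF hd(1)] Cons.prems(2) by blast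
      then show ?thesis using False by (metis hd_in_set list.set_intros(2))
    next
      case False
      then show ?thesis using Cons.IH[OF hd(2) False Cons.prems(3)] by simp
    qed
  qed (use Cons.prems in \<open>auto simp: dpath_Cons\<close>)
qed (simp add: dpath_def)

lemma dpath_into_below_v_interior:
  assumes "dpath A s t q" "(v, s) \<notin> A\<^sup>*" "(v, t) \<in> A\<^sup>*" "t \<noteq> v"
  shows "v \<in> interior q"
proof (rule interiorI)
  show "v \<in> set q" using assms(1-3) by (rule dpath_into_below_v_passes_v)
  show "v \<noteq> hd q" "v \<noteq> last q" using assms unfolding dpath_def by auto
qed

lemma cluster_separates_not_consistent:
  assumes "a \<in> cluster A X v" "c \<in> cluster A X v" "b \<in> X - cluster A X v"
  shows "\<not> triplet_consistent V A a b c"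
proof
  assume "triplet_consistent V A a b c"
  then obtain p w pc pw pa pb where paths: "dpath A p c pc" "dpath A p w pw" "dpath A w a pa"
      "dpath A w b pb" and disj: "interior pc \<inter> interior pa = {}"
    unfolding triplet_consistent_def by blast
  have "(v, b) \<notin> A\<^sup>*" using assms(3) unfolding cluster_def by blast
  then have "(v, w) \<notin> A\<^sup>*" using dpath_imp_rtrancl[OF paths(4)] by (blast intro: rtrancl_trans)
  then have "(v, p) \<notin> A\<^sup>*" using dpath_imp_rtrancl[OF paths(2)] by (blast intro: rtrancl_trans)
  txt \<open>Both the path to c and the path to a must enter the subnetwork below v through v.\<close>
  have "v \<in> interior pc"
    using dpath_into_below_v_interior[OF paths(1) \<open>(v, p) \<notin> A\<^sup>*\<close>] assms(2) v_notin_X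
    unfolding cluster_def by blast
  moreover have "v \<in> interior pa"
    using dpath_into_below_v_interior[OF paths(3) \<open>(v, w) \<notin> A\<^sup>*\<close>] assms(1) v_notin_X
    unfolding cluster_def by blast
  ultimately show False using disj by blast
qed

lemma pair_in_cluster_consistent:
  assumes "a \<in> cluster A X v" "b \<in> cluster A X v" "a \<noteq> b" "c \<in> X - cluster A X v"
  shows "triplet_consistent V A a b c"
proof -
  have a: "a \<in> X" "(v, a) \<in> A\<^sup>*" and b: "b \<in> X" "(v, b) \<in> A\<^sup>*" and c: "c \<in> X" "(v, c) \<notin> A\<^sup>*"
    using assms unfolding cluster_def by auto
  txt \<open>w branches towards a and b below v; p, below the root, branches towards c and w.\<close>
  have "(a, b) \<notin> A\<^sup>*" "(b, a) \<notin> A\<^sup>*" using leaf_rtrancl a b assms(3) by blast+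
  then obtain w pa pb where w: "(v, w) \<in> A\<^sup>*" and pa: "dpath A w a pa" and pb: "dpath A w b pb"
      and meet_w: "set pa \<inter> set pb = {w}"
    using disjoint_paths_to_incomparable[OF a(2) b(2)] by blast
  from pa pb meet_w have "interior pa \<inter> interior pb = {}" by (rule interiors_disjoint)
  have "w \<in> V" using rtrancl_in_V[OF w v_in_V] .
  have wc: "(w, c) \<notin> A\<^sup>*" using rtrancl_trans[OF w] c(2) by blast
  have cw: "(c, w) \<notin> A\<^sup>*" using leaf_rtrancl[OF c(1)] w c(2) by blast
  obtain r where "r \<in> V" "in_deg A r = 0" using root_exists by blast
  then have r: "r \<in> V" "\<And>x. x \<in> V \<Longrightarrow> (r, x) \<in> A\<^sup>*" by (auto intro: source_reaches_all)
  have "c \<in> V" using c(1) leaves_eq by blast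
  then obtain p pc pw where "(r, p) \<in> A\<^sup>*" and pc: "dpath A p c pc" and pw: "dpath A p w pw"
      and meet_p: "set pc \<inter> set pw = {p}"
    using disjoint_paths_to_incomparable[OF r(2) r(2)[OF \<open>w \<in> V\<close>] cw wc] by blast
  from pc pw meet_p have "interior pc \<inter> interior pw = {}" by (rule interiors_disjoint)
  have "p \<in> V" using rtrancl_in_V[OF \<open>(r, p) \<in> A\<^sup>*\<close> r(1)] .
  have "p \<noteq> w" using dpath_imp_rtrancl[OF pc] wc by blast
  have "(w, c) \<notin> A\<^sup>+" "(w, w) \<notin> A\<^sup>+" using wc trancl_irrefl by (auto dest: trancl_into_rtrancl)
  then have "interior pc \<inter> interior pa = {}" "interior pc \<inter> interior pb = {}"
      "interior pw \<inter> interior pa = {}" "interior pw \<inter> interior pb = {}"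
    using interiors_disjoint_if_not_trancl pa pb pc pw by blast+
  then show ?thesis
    unfolding triplet_consistent_def
    using \<open>p \<in> V\<close> \<open>w \<in> V\<close> \<open>p \<noteq> w\<close> pc pw pa pb \<open>interior pc \<inter> interior pw = {}\<close>
      \<open>interior pa \<inter> interior pb = {}\<close>
    by blast
qed

lemma SN_set_cluster: "SN_set (triplets V A X) X (cluster A X v)"
  unfolding SN_set_def
proof (intro conjI notI)
  show "cluster A X v \<subseteq> X" by (auto simp: cluster_def)
  assume "\<exists>x y z. (x, y, z) \<in> triplets V A X \<and> x \<in> cluster A X v \<and> z \<in> cluster A X v \<and> y \<notin> cluster A X v"
  then obtain x y z where "triplet_consistent V A x y z" "y \<in> X"
      "x \<in> cluster A X v" "z \<in> cluster A X v" "y \<notin> cluster A X v"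
    by (auto simp: triplets_def)
  then show False using cluster_separates_not_consistent by blast
qed

lemma cluster_compatible_with_SN_set:
  assumes SN: "SN_set (triplets V A X) X S"
  shows "cluster A X v \<inter> S \<in> {{}, cluster A X v, S}"
proof (rule ccontr)
  assume "cluster A X v \<inter> S \<notin> {{}, cluster A X v, S}"
  then obtain a b c where "a \<in> cluster A X v \<inter> S" "b \<in> cluster A X v - S" "c \<in> S - cluster A X v"
    by blast
  moreover have "S \<subseteq> X" "cluster A X v \<subseteq> X" using SN by (auto simp: SN_set_def cluster_def)
  ultimately have "(a, b, c) \<in> triplets V A X"
    using pair_in_cluster_consistent[of a b c] by (auto simp: triplets_def)
  then show False using SN \<open>a \<in> cluster A X v \<inter> S\<close> \<open>b \<in> cluster A X v - S\<close> \<open>c \<in> S - cluster A X v\<close>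
    unfolding SN_set_def by blast
qed

lemma child_of_lowest_outside:
  assumes no_adjacent_hybrids: "\<And>c d. (c, d) \<in> A \<Longrightarrow> is_hybrid A c \<Longrightarrow> \<not> is_hybrid A d"
    and tc: "(t, c) \<in> A" and vt: "(v, t) \<notin> A\<^sup>*"
    and lowest: "\<And>y. (t, y) \<in> A\<^sup>+ \<Longrightarrow> (v, y) \<notin> A\<^sup>* \<Longrightarrow> is_hybrid A y"
  shows "c = v \<or> (c, v) \<in> A"
proof (cases "(v, c) \<in> A\<^sup>*")
  case True
  then show ?thesis using arc_entering_below_v[OF tc True vt] by simp
next
  case vc: False
  then have "is_hybrid A c" using lowest[OF r_into_trancl[OF tc]] by simp
  then have "out_deg A c \<noteq> 0" by (simp add: is_hybrid_def)
  then obtain d where cd: "(c, d) \<in> A" using child_exists[of A c] by auto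
  have "(v, d) \<in> A\<^sup>*"
  proof (rule ccontr)
    assume "(v, d) \<notin> A\<^sup>*"
    moreover have "(t, d) \<in> A\<^sup>+" using tc cd by (rule trancl_into_trancl[OF r_into_trancl])
    ultimately have "is_hybrid A d" using lowest by simp
    then show False using no_adjacent_hybrids[OF cd \<open>is_hybrid A c\<close>] by contradiction
  qed
  then show ?thesis using arc_entering_below_v[OF cd _ vc] cd by blast
qed

lemma cluster_neq_leaves:
  assumes no_adjacent_hybrids: "\<And>c d. (c, d) \<in> A \<Longrightarrow> is_hybrid A c \<Longrightarrow> \<not> is_hybrid A d"
  shows "cluster A X v \<noteq> X"
proof
  assume all_below: "cluster A X v = X"
  obtain r where r: "r \<in> V" "in_deg A r = 0" "out_deg A r \<ge> 2"
      "\<forall>a\<in>V. a \<noteq> r \<and> \<not> is_leaf A a \<longrightarrow> is_split A a \<or> is_hybrid A a"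
    using root_exists by blast
  let ?Q = "{x \<in> V. (v, x) \<notin> A\<^sup>* \<and> \<not> is_hybrid A x}"
  have "r \<in> ?Q" using r(1,2) source_not_below_v by (simp add: is_hybrid_def)
  have "wf ((A\<^sup>+)\<inverse>)" using wf_trancl[OF wf_converse_arcs] by (simp add: trancl_converse)
  then obtain t where t: "t \<in> ?Q" and "\<And>y. (y, t) \<in> (A\<^sup>+)\<inverse> \<Longrightarrow> y \<notin> ?Q"
    using \<open>r \<in> ?Q\<close> by (rule wfE_min) (rule that)
  then have lowest: "\<And>y. (t, y) \<in> A\<^sup>+ \<Longrightarrow> y \<notin> ?Q" by simp
  have "\<not> is_leaf A t" using t all_below leaves_eq unfolding cluster_def by blast
  then have "out_deg A t \<ge> 2" using t r(3,4) by (cases "t = r") (auto simp: is_split_def)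
  then obtain c1 c2 where c: "(t, c1) \<in> A" "(t, c2) \<in> A" "c1 \<noteq> c2" using two_children[of A t] by auto
  txt \<open>Each child c of t is v or a parent of v, so parent c is a parent of v; as v has a
    single parent, either c1 = c2 or t is a child of itself.\<close>
  define parent where "parent c = (if c = v then t else c)" for c
  have "is_hybrid A y" if "(t, y) \<in> A\<^sup>+" "(v, y) \<notin> A\<^sup>*" for y
    using lowest[OF that(1)] trancl_in_V[OF that(1)] that(2) by simp
  then have "c = v \<or> (c, v) \<in> A" if "(t, c) \<in> A" for c
    using child_of_lowest_outside[OF no_adjacent_hybrids that] t by simp
  then have "(parent c, v) \<in> A" if "(t, c) \<in> A" for c
    using that unfolding parent_def by auto
  then have "parent c1 = parent c2"
    using parent_unique[of A v "parent c1" "parent c2"] c split by (simp add: is_split_def)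
  moreover have "(t, t) \<notin> A" using trancl_irrefl by blast
  ultimately show False using c unfolding parent_def by (auto split: if_splits)
qed

end

theorem mainTheorem6:
  fixes X V V' :: "'v set" and A A' :: "('v \<times> 'v) set" and v v' :: 'v
  assumes "finite X" and "card X \<ge> 3"
    and "binary_level1_net V A X" and "binary_level1_net V' A' X"
    and "triplets V A X \<subseteq> triplets V' A' X"
    and "v \<in> V" and "is_split A v" and "\<exists>u. cut_arc V A (u, v)"
    and "v' \<in> V'" and "is_split A' v'" and "\<exists>u. cut_arc V' A' (u, v')"
  shows "cluster A X v \<inter> cluster A' X v' \<in> {{}, cluster A X v, cluster A' X v'}
    \<and> (cluster A X v \<subset> cluster A' X v' \<longrightarrow>
         \<not> maximal_SN_set (triplets V A X) X (cluster A X v))"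
proof -
  obtain u u' where "cut_arc V A (u, v)" "cut_arc V' A' (u', v')" using assms(8,11) by blast
  then interpret N: split_head_of_cut_arc V A X u v + N': split_head_of_cut_arc V' A' X u' v'
    using assms(3,4,7,10) by (auto intro!: split_head_of_cut_arc.intro phylo_network.intro
        split_head_of_cut_arc_axioms.intro binary_level1_net_phylo_net)
  have SN: "SN_set (triplets V A X) X (cluster A' X v')"
    using assms(5) N'.SN_set_cluster by (rule SN_set_antimono)
  have "cluster A' X v' \<noteq> X"
    using binary_level1_net_no_adjacent_hybrids[OF assms(4)] by (rule N'.cluster_neq_leaves)
  with SN have "\<not> maximal_SN_set (triplets V A X) X (cluster A X v)"
    if "cluster A X v \<subset> cluster A' X v'"
    using that unfolding maximal_SN_set_def by blast
  then show ?thesis using N.cluster_compatible_with_SN_set[OF SN] by blast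
qed

end
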